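(* Let $m>n$ be coprime positive integers, $\alpha=\epsilon_i-\delta_j$, $\lambda\in X_\alpha$, $\lambda^+=t_\alpha(\lambda)$, $\Lambda=x(\lambda)$ and $\Lambda^+=\tau_\alpha(\Lambda)$. If $(\Lambda^+,\beta)=0$ for $\beta=\epsilon_k-\delta_j$ with $k\in[n]$, then one of the following holds: (a) $k=i-1$, $\lambda_{n+1-i}=\lambda_{n+2-i}$ and $\beta=\epsilon_{i-1}-\delta_j$; (b) $\alpha=\epsilon_1-\delta_1$, $\beta=\epsilon_n-\delta_1$, $\lambda_1=m$, $\lambda_n=0$, and $(m,1^{n-1})\subseteq\lambda^+$ (i.e. $\lambda^+_1=m$ and $\lambda^+_n\ge1$).
   Context: $X$ is the set of partitions $\lambda=(\lambda_1\ge\dots\ge\lambda_n\ge0)$ with $\lambda_1\le m$, drawn in an $n\times m$ rectangle with rows $\epsilon_1,\dots,\epsilon_n$ top to bottom and columns $\delta_1,\dots,\delta_m$; the diagram consists of boxes $\epsilon_i-\delta_j$ with $j\le\lambda_{n+1-i}$; $\lambda'_j=\#\{i:\lambda_i\ge j\}$. $X_\alpha$: diagrams for which box $\alpha$ is an outer corner; $t_\alpha$ adds that box. $x(\lambda)=(a_1,\dots,a_n|b_1,\dots,b_m)$ with $a_i=m(n-i)+n\lambda_{n+1-i}$, $b_j=n(j-1)+m\lambda'_j$; $\tau_\alpha$ adds $n$ to $a_i$ and $m$ to $b_j$. For $\Lambda=(a|b)$ and $\gamma=\epsilon_p-\delta_q$, $(\Lambda,\gamma)=a_p-b_q$. *)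

theory Defs
  imports Main
begin

definition partitions :: "nat \<Rightarrow> nat \<Rightarrow> (nat \<Rightarrow> nat) set" where
  "partitions n m = {lam.
      (\<forall>a b. 1 \<le> a \<longrightarrow> a \<le> b \<longrightarrow> b \<le> n \<longrightarrow> lam b \<le> lam a)
    \<and> (\<forall>a. 1 \<le> a \<and> a \<le> n \<longrightarrow> lam a \<le> m)
    \<and> (\<forall>a. a < 1 \<or> n < a \<longrightarrow> lam a = 0)}"

text \<open>Young diagram in the n x m rectangle: box (i,j) stands for epsilon_i - delta_j,
  rows i = 1..n top to bottom; row i has length lam (n+1-i).\<close>
definition diagram :: "nat \<Rightarrow> (nat \<Rightarrow> nat) \<Rightarrow> (nat \<times> nat) set" where
  "diagram n lam = {(i, j). 1 \<le> i \<and> i \<le> n \<and> 1 \<le> j \<and> j \<le> lam (n + 1 - i)}"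

definition outer_corner :: "nat \<Rightarrow> nat \<Rightarrow> (nat \<Rightarrow> nat) \<Rightarrow> nat \<Rightarrow> nat \<Rightarrow> bool" where
  "outer_corner n m lam i j \<longleftrightarrow>
     1 \<le> i \<and> i \<le> n \<and> 1 \<le> j \<and> j \<le> m \<and> (i, j) \<notin> diagram n lam \<and>
     (\<exists>mu \<in> partitions n m. diagram n mu = insert (i, j) (diagram n lam))"

definition X_alpha :: "nat \<Rightarrow> nat \<Rightarrow> nat \<Rightarrow> nat \<Rightarrow> (nat \<Rightarrow> nat) set" where
  "X_alpha n m i j = {lam \<in> partitions n m. outer_corner n m lam i j}"

definition t_alpha :: "nat \<Rightarrow> nat \<Rightarrow> nat \<Rightarrow> (nat \<Rightarrow> nat) \<Rightarrow> (nat \<Rightarrow> nat)" where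
  "t_alpha n i j lam = lam((n + 1 - i) := lam (n + 1 - i) + 1)"

definition conj :: "nat \<Rightarrow> (nat \<Rightarrow> nat) \<Rightarrow> nat \<Rightarrow> nat" where
  "conj n lam j = card {l \<in> {1..n}. j \<le> lam l}"

text \<open>Weights Lambda = (a_1..a_n | b_1..b_m), represented as a pair of functions.\<close>
type_synonym weight = "(nat \<Rightarrow> int) \<times> (nat \<Rightarrow> int)"

definition x_wt :: "nat \<Rightarrow> nat \<Rightarrow> (nat \<Rightarrow> nat) \<Rightarrow> weight" where
  "x_wt n m lam =
     ((\<lambda>i. int m * (int n - int i) + int n * int (lam (n + 1 - i))),
      (\<lambda>j. int n * (int j - 1) + int m * int (conj n lam j)))"

definition tau_alpha :: "nat \<Rightarrow> nat \<Rightarrow> nat \<Rightarrow> nat \<Rightarrow> weight \<Rightarrow> weight" where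
  "tau_alpha n m i j W =
     ((fst W)(i := fst W i + int n), (snd W)(j := snd W j + int m))"

text \<open>(Lambda, epsilon_p - delta_q) = a_p - b_q.\<close>
definition pairing :: "weight \<Rightarrow> nat \<Rightarrow> nat \<Rightarrow> int" where
  "pairing W p q = fst W p - snd W q"

end

theory Submission
  imports Defs
begin

text \<open>Adding the box \<alpha> = \<epsilon>_i - \<delta>_j to \<lambda> forces j = \<lambda>_r + 1 for r = n + 1 - i, and column j
  of \<lambda> consists exactly of the rows above row i, so \<lambda>'_j = n - i. Hence (\<Lambda>+, \<beta>) = 0 reads
  m (i - 1 - k) = n (\<lambda>_r - \<lambda>_(n+1-k) - [k = i]); here k = i would give m = n. By coprimality
  n divides i - 1 - k, which lies in [-n, n), so either k = i - 1, whence \<lambda>_r = \<lambda>_(r+1), or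
  i = 1 and k = n, whence \<lambda>_1 - \<lambda>_n = m forces \<lambda>_1 = m, \<lambda>_n = 0 and j = 1.\<close>

lemma partitions_antimono:
  "lam \<in> partitions n m \<Longrightarrow> 1 \<le> a \<Longrightarrow> a \<le> b \<Longrightarrow> b \<le> n \<Longrightarrow> lam b \<le> lam a"
  by (simp add: partitions_def)

lemma partitions_le_width:
  assumes "lam \<in> partitions n m"
  shows "lam a \<le> m"
  using assms by (cases "a = 0 \<or> n < a") (auto simp: partitions_def)

lemma X_alphaE:
  assumes "lam \<in> X_alpha n m i j"
  obtains mu where "lam \<in> partitions n m" "mu \<in> partitions n m"
    "1 \<le> i" "i \<le> n" "1 \<le> j" "j \<le> m" "(i, j) \<notin> diagram n lam"
    "diagram n mu = insert (i, j) (diagram n lam)"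
  using assms by (auto simp: X_alpha_def outer_corner_def)

lemma X_alpha_column:
  assumes "lam \<in> X_alpha n m i j"
  shows "j = lam (n + 1 - i) + 1"
proof -
  obtain mu where i: "1 \<le> i" "i \<le> n" and "(i, j) \<notin> diagram n lam"
    and mu: "diagram n mu = insert (i, j) (diagram n lam)"
    using assms by (rule X_alphaE)
  then have "lam (n + 1 - i) < j" "j \<le> mu (n + 1 - i)"
    by (auto simp: diagram_def set_eq_iff)
  then have "(i, lam (n + 1 - i) + 1) \<in> diagram n mu"
    using i by (simp add: diagram_def)
  moreover have "(i, lam (n + 1 - i) + 1) \<notin> diagram n lam"
    by (simp add: diagram_def)
  ultimately show ?thesis
    using mu by auto
qed

lemma conj_X_alpha:
  assumes "lam \<in> X_alpha n m i j"
  shows "conj n lam j = n - i"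
proof -
  obtain mu where lam: "lam \<in> partitions n m" and mu_part: "mu \<in> partitions n m"
    and i: "1 \<le> i" "i \<le> n" and j: "1 \<le> j"
    and mu: "diagram n mu = insert (i, j) (diagram n lam)"
    using assms by (rule X_alphaE)
  define r where "r = n + 1 - i"
  have r: "1 \<le> r" "r \<le> n" "j = lam r + 1"
    using i X_alpha_column[OF assms] by (auto simp: r_def)
  have "j \<le> mu r"
    using mu i j by (auto simp: diagram_def set_eq_iff r_def)
  have above: "j \<le> lam l" if "1 \<le> l" "l < r" for l
  proof -
    have "(n + 1 - l, j) \<in> diagram n mu"
      using partitions_antimono[OF mu_part, of l r] \<open>j \<le> mu r\<close> that r j
      by (auto simp: diagram_def)
    moreover have "n + 1 - l \<noteq> i"
      using that r_def r by auto
    ultimately have "(n + 1 - l, j) \<in> diagram n lam"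
      using mu by blast
    with that r show ?thesis
      by (simp add: diagram_def)
  qed
  have below: "lam l < j" if "r \<le> l" "l \<le> n" for l
    using partitions_antimono[OF lam, of r l] that r by simp
  have "{l \<in> {1..n}. j \<le> lam l} = {1..<r}"
  proof (intro set_eqI iffI)
    fix l
    assume "l \<in> {l \<in> {1..n}. j \<le> lam l}"
    then show "l \<in> {1..<r}"
      using below[of l] by (auto simp: not_less[symmetric])
  next
    fix l
    assume "l \<in> {1..<r}"
    then show "l \<in> {l \<in> {1..n}. j \<le> lam l}"
      using above[of l] r by auto
  qed
  then show ?thesis
    by (simp add: conj_def r_def)
qed

lemma pairing_tau_alpha_x_wt:
  assumes "lam \<in> X_alpha n m i j"
  shows "pairing (tau_alpha n m i j (x_wt n m lam)) k j
    = int m * (int i - 1 - int k)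
      - int n * (int (lam (n + 1 - i)) - int (lam (n + 1 - k)) - (if k = i then 1 else 0))"
proof -
  have "i \<le> n"
    using assms by (rule X_alphaE)
  have "pairing (tau_alpha n m i j (x_wt n m lam)) k j
      = int m * (int n - int k) + int n * int (lam (n + 1 - k)) + (if k = i then int n else 0)
        - (int n * int (lam (n + 1 - i)) + int m * int (n - i)) - int m"
    using X_alpha_column[OF assms] conj_X_alpha[OF assms]
    by (simp add: pairing_def tau_alpha_def x_wt_def)
  also have "\<dots> = int m * (int i - 1 - int k)
      - int n * (int (lam (n + 1 - i)) - int (lam (n + 1 - k)) - (if k = i then 1 else 0))"
    using \<open>i \<le> n\<close> by (simp add: of_nat_diff algebra_simps)
  finally show ?thesis .
qed

lemma pairing_tau_alpha_x_wt_eq_0: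
  assumes "lam \<in> X_alpha n m i j" "n \<noteq> m"
    and "pairing (tau_alpha n m i j (x_wt n m lam)) k j = 0"
  shows "k \<noteq> i" "int m * (int i - 1 - int k) = int n * (int (lam (n + 1 - i)) - int (lam (n + 1 - k)))"
proof -
  have eq: "int m * (int i - 1 - int k)
      = int n * (int (lam (n + 1 - i)) - int (lam (n + 1 - k)) - (if k = i then 1 else 0))"
    using assms(3) pairing_tau_alpha_x_wt[OF assms(1), of k] by simp
  show "k \<noteq> i"
  proof
    assume "k = i"
    with eq have "int m = int n"
      by simp
    with assms(2) show False
      by simp
  qed
  with eq show "int m * (int i - 1 - int k) = int n * (int (lam (n + 1 - i)) - int (lam (n + 1 - k)))"
    by simp
qed

lemma coprime_dvd_of_mult_eq:
  fixes a b d e :: "'a :: semiring_gcd"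
  assumes "coprime a b" "a * d = b * e"
  shows "b dvd d"
proof -
  have "b dvd a * d"
    unfolding assms(2) by (rule dvd_triv_left)
  with assms(1) show ?thesis
    by (simp add: coprime_commute coprime_dvd_mult_right_iff)
qed

lemma int_dvd_in_window:
  fixes n d :: int
  assumes "n dvd d" "- n \<le> d" "d < n"
  shows "d = 0 \<or> d = - n"
proof -
  obtain c where d: "d = n * c"
    using assms(1) by blast
  have "n > 0"
    using assms(2,3) by linarith
  then have "- 1 \<le> c" "c < 1"
    using assms(2,3) unfolding d
    by (metis mult.right_neutral mult_minus_right mult_le_cancel_left_pos,
        metis mult.right_neutral mult_less_cancel_left_pos)
  then have "c = 0 \<or> c = - 1"
    by auto
  then show ?thesis
    using d by auto
qed

lemma X_alpha_full_first_row:
  assumes "lam \<in> X_alpha n m 1 j" "int (lam 1) - int (lam n) = int m"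
  shows "lam 1 = m" "lam n = 0" "j = 1"
proof -
  have "lam 1 \<le> m"
    using assms(1) by (auto simp: X_alpha_def intro: partitions_le_width)
  with assms(2) show "lam 1 = m" "lam n = 0"
    by auto
  then show "j = 1"
    using X_alpha_column[OF assms(1)] by simp
qed

theorem lemma4p8:
  fixes n m i j k :: nat and lam :: "nat \<Rightarrow> nat"
  assumes "0 < n" "n < m" "coprime m n"
    and "1 \<le> i" "i \<le> n" "1 \<le> j" "j \<le> m"
    and "lam \<in> X_alpha n m i j"
    and "1 \<le> k" "k \<le> n"
    and "pairing (tau_alpha n m i j (x_wt n m lam)) k j = 0"
  shows "(k = i - 1 \<and> lam (n + 1 - i) = lam (n + 2 - i))
       \<or> (i = 1 \<and> j = 1 \<and> k = n \<and> lam 1 = m \<and> lam n = 0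
          \<and> t_alpha n i j lam 1 = m \<and> 1 \<le> t_alpha n i j lam n)"
proof -
  let ?d = "int i - 1 - int k"
  have "k \<noteq> i" and key: "int m * ?d = int n * (int (lam (n + 1 - i)) - int (lam (n + 1 - k)))"
    using pairing_tau_alpha_x_wt_eq_0 assms(2,8,11) by auto
  moreover have "coprime (int m) (int n)"
    using assms(3) by simp
  ultimately have "int n dvd ?d"
    by (intro coprime_dvd_of_mult_eq[of "int m" _ ?d])
  moreover have "- int n \<le> ?d" "?d < int n"
    using assms(4,5,9,10) by linarith+
  ultimately consider "?d = 0" | "?d = - int n"
    using int_dvd_in_window by blast
  then show ?thesis
  proof cases
    case 1
    then have "i = k + 1" "n + 1 - k = n + 2 - i"
      by simp_all
    with key assms(1) show ?thesis
      by simp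
  next
    case 2
    then have i: "i = 1" and k: "k = n"
      using assms(4,9,10) by auto
    have "int n * (int (lam 1) - int (lam n)) = int n * int m"
      using key unfolding i k by (simp add: right_diff_distrib mult.commute)
    with assms(1) have "int (lam 1) - int (lam n) = int m"
      by simp
    moreover have "lam \<in> X_alpha n m 1 j"
      using assms(8) unfolding i .
    ultimately have "lam 1 = m" "lam n = 0" "j = 1"
      using X_alpha_full_first_row by blast+
    with i k \<open>k \<noteq> i\<close> show ?thesis
      by (simp add: t_alpha_def)
  qed
qed

end
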